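(* Let $T=\{t_1,\ldots,t_N\}$ be documents, each containing at most $L$ distinct words from a dictionary $\{w_1,\ldots,w_D\}$ ($D\ge 2$). For a word $w$ let $\#(w)$ be the number of documents containing $w$ and for words $x,y$ let $\#(x,y)$ be the number of documents containing both. Fix $\epsilon\in(0,1]$ and $p=2\log D$. Consider the MapReduce mapper that, for every document $t$ and every unordered pair of distinct words $(w_i,w_j)$ in $t$, independently emits the key-value pair $((w_i,w_j)\to 1)$ with probability $\min\!\left(1,\frac{p}{\epsilon}\frac{1}{\sqrt{\#(w_i)}\sqrt{\#(w_j)}}\right)$ (CosineSampleEmit). Then the expected total number of emitted pairs (the shuffle size) is at most $\frac{p}{\epsilon}LD=O(DL\log(D)/\epsilon)$, independently of $N$. Moreover, this is tight up to the factor $\log(D)/\epsilon$: whenever $L\ge 2$ divides $D$, there is an input of this form with at least $(D/L)\binom{L}{2}=\Omega(DL)$ pairs of words having cosine similarity $1\ge\epsilon$, so any algorithm that outputs all pairs with cosine similarity at least $\epsilon$ (in particular a shuffle of CosineSampleEmit from which these are computed) must produce $\Omega(DL)$ output in the worst case.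
   Context: Cosine similarity of words $x,y$ is $\frac{\#(x,y)}{\sqrt{\#(x)}\sqrt{\#(y)}}$. The shuffle size is the total number of key-value pairs emitted by the mappers over all documents. $\log$ denotes the natural logarithm. *)

theory Defs
  imports "HOL-Probability.Probability"
begin

text \<open>A corpus: N documents T 0, ..., T (N-1), each a set of words (words are natural numbers;
  the dictionary is {0..<D}).\<close>

definition occ :: "nat \<Rightarrow> (nat \<Rightarrow> nat set) \<Rightarrow> nat \<Rightarrow> nat" where
  "occ N T w = card {k. k < N \<and> w \<in> T k}"

definition co_occ :: "nat \<Rightarrow> (nat \<Rightarrow> nat set) \<Rightarrow> nat \<Rightarrow> nat \<Rightarrow> nat" where
  "co_occ N T x y = card {k. k < N \<and> x \<in> T k \<and> y \<in> T k}"

definition cosine :: "nat \<Rightarrow> (nat \<Rightarrow> nat set) \<Rightarrow> nat \<Rightarrow> nat \<Rightarrow> real" where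
  "cosine N T x y = real (co_occ N T x y) / (sqrt (real (occ N T x)) * sqrt (real (occ N T y)))"

text \<open>The potential emissions of the mapper: one per document k and unordered pair of distinct
  words {a,b} of that document.\<close>
definition emit_slots :: "nat \<Rightarrow> (nat \<Rightarrow> nat set) \<Rightarrow> (nat \<times> nat set) set" where
  "emit_slots N T = {(k, e). k < N \<and> (\<exists>a b. a \<in> T k \<and> b \<in> T k \<and> a \<noteq> b \<and> e = {a, b})}"

definition emit_prob :: "real \<Rightarrow> real \<Rightarrow> nat \<Rightarrow> (nat \<Rightarrow> nat set) \<Rightarrow> nat set \<Rightarrow> real" where
  "emit_prob p \<epsilon> N T e =
     (let a = Min e; b = Max e in
      min 1 (p / \<epsilon> * (1 / (sqrt (real (occ N T a)) * sqrt (real (occ N T b))))))"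

definition cosine_sample_emit :: "real \<Rightarrow> real \<Rightarrow> nat \<Rightarrow> (nat \<Rightarrow> nat set) \<Rightarrow> (nat \<times> nat set \<Rightarrow> bool) pmf" where
  "cosine_sample_emit p \<epsilon> N T =
     Pi_pmf (emit_slots N T) False (\<lambda>(k, e). bernoulli_pmf (emit_prob p \<epsilon> N T e))"

definition shuffle_size :: "nat \<Rightarrow> (nat \<Rightarrow> nat set) \<Rightarrow> (nat \<times> nat set \<Rightarrow> bool) \<Rightarrow> nat" where
  "shuffle_size N T f = card {s \<in> emit_slots N T. f s}"

end

theory Submission
  imports Defs
begin

text \<open>By linearity of expectation the expected shuffle size is the sum of the emission
  probabilities. With \<open>c = p/\<epsilon>\<close>, AM-GM bounds \<open>min(1, c / (\<surd>#(a) \<surd>#(b)))\<close> by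
  \<open>c (1/#(a) + 1/#(b)) / 2\<close>, so a document \<open>t\<close> with at most \<open>L\<close> words contributes at most
  \<open>c L \<Sum>{1/#(a) | a \<in> t}\<close>; summed over all documents, every word \<open>a\<close> is counted \<open>#(a)\<close>
  times with weight \<open>1/#(a)\<close>, which leaves at most \<open>c L D\<close>. For the lower bound, cut the
  dictionary into \<open>D/L\<close> blocks of \<open>L\<close> consecutive words and make each block a document: any
  two words of a block occur in exactly one document, namely together, so their cosine
  similarity is 1.\<close>

lemma expectation_card_Pi_pmf_bernoulli:
  fixes S :: "'a set" and q :: "'a \<Rightarrow> real"
  assumes "finite S" and "\<And>s. s \<in> S \<Longrightarrow> 0 \<le> q s \<and> q s \<le> 1"
  shows "measure_pmf.expectation (Pi_pmf S False (\<lambda>s. bernoulli_pmf (q s)))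
           (\<lambda>f. real (card {s \<in> S. f s})) = (\<Sum>s\<in>S. q s)"
proof -
  let ?P = "Pi_pmf S False (\<lambda>s. bernoulli_pmf (q s))"
  have indicator_sum: "real (card {s \<in> S. f s}) = (\<Sum>s\<in>S. if f s then 1 else 0)" for f
    using assms(1) by (simp add: sum.If_cases Int_def)
  have component: "measure_pmf.expectation ?P (\<lambda>f. if f s then 1 else 0 :: real) = q s"
    if "s \<in> S" for s
  proof -
    have "measure_pmf.expectation ?P (\<lambda>f. if f s then 1 else 0 :: real)
        = measure_pmf.expectation (map_pmf (\<lambda>f. f s) ?P) (\<lambda>b. if b then 1 else 0 :: real)"
      by simp
    also have "\<dots> = q s"
      using Pi_pmf_component[OF assms(1), of s False] assms(2)[OF that] that by simp
    finally show ?thesis .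
  qed
  have "measure_pmf.expectation ?P (\<lambda>f. real (card {s \<in> S. f s}))
      = (\<Sum>s\<in>S. measure_pmf.expectation ?P (\<lambda>f. if f s then 1 else 0 :: real))"
    unfolding indicator_sum
    by (subst Bochner_Integration.integral_sum)
       (auto intro!: measure_pmf.integrable_const_bound[where B = 1])
  also have "\<dots> = (\<Sum>s\<in>S. q s)"
    using component by (rule sum.cong[OF refl])
  finally show ?thesis .
qed

lemma inverse_sqrt_mult_le_mean:
  fixes x y :: real
  assumes "0 \<le> x" and "0 \<le> y"
  shows "1 / (sqrt x * sqrt y) \<le> (1 / x + 1 / y) / 2"
proof -
  have "sqrt (1 / x * (1 / y)) \<le> (1 / x + 1 / y) / 2"
    using assms by (intro arith_geo_mean_sqrt) auto
  then show ?thesis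
    by (simp add: real_sqrt_mult real_sqrt_divide)
qed

lemma sum_product_mean:
  fixes h :: "'a \<Rightarrow> real"
  assumes "finite A"
  shows "(\<Sum>(a, b)\<in>A \<times> A. (h a + h b) / 2) = real (card A) * sum h A"
proof -
  have "(\<Sum>(a, b)\<in>A \<times> A. (h a + h b) / 2) = (\<Sum>a\<in>A. (real (card A) * h a + sum h A) / 2)"
    by (simp add: sum.cartesian_product[symmetric] sum.distrib sum_divide_distrib[symmetric])
  also have "\<dots> = real (card A) * sum h A"
    by (simp add: sum_divide_distrib[symmetric] sum.distrib sum_distrib_left[symmetric])
  finally show ?thesis .
qed

lemma emit_prob_nonneg:
  assumes "0 \<le> p / \<epsilon>"
  shows "0 \<le> emit_prob p \<epsilon> N T e"
  unfolding emit_prob_def Let_def using assms by (intro min.boundedI mult_nonneg_nonneg) auto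

lemma emit_prob_le_one: "emit_prob p \<epsilon> N T e \<le> 1"
  by (simp add: emit_prob_def Let_def)

text \<open>No positivity of the occurrence counts is needed: a zero count makes both the emission
  probability and the bound vanish, since \<open>1 / 0 = 0\<close>.\<close>
lemma emit_prob_doubleton_le_mean:
  assumes "0 \<le> p / \<epsilon>"
  shows "emit_prob p \<epsilon> N T {a, b}
           \<le> p / \<epsilon> * (1 / real (occ N T a) + 1 / real (occ N T b)) / 2"
proof -
  have sqrt_prod: "sqrt (real (occ N T (min a b))) * sqrt (real (occ N T (max a b)))
                 = sqrt (real (occ N T a)) * sqrt (real (occ N T b))"
    by (cases "a \<le> b") (simp_all add: min_def max_def)
  have "emit_prob p \<epsilon> N T {a, b} \<le> p / \<epsilon> * (1 / (sqrt (real (occ N T a)) * sqrt (real (occ N T b))))"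
    by (simp add: emit_prob_def sqrt_prod)
  also have "\<dots> \<le> p / \<epsilon> * ((1 / real (occ N T a) + 1 / real (occ N T b)) / 2)"
    using assms by (intro mult_left_mono inverse_sqrt_mult_le_mean) auto
  finally show ?thesis by simp
qed

lemma sum_emit_prob_doubletons_le:
  assumes "finite A" and "0 \<le> p / \<epsilon>"
  shows "(\<Sum>e\<in>{e. e \<subseteq> A \<and> card e = 2}. emit_prob p \<epsilon> N T e)
           \<le> p / \<epsilon> * real (card A) * (\<Sum>a\<in>A. 1 / real (occ N T a))"
proof -
  let ?q = "emit_prob p \<epsilon> N T" and ?h = "\<lambda>a. 1 / real (occ N T a)"
  define Q where "Q = {(a, b) \<in> A \<times> A. a \<noteq> b}"
  have doubletons: "{e. e \<subseteq> A \<and> card e = 2} = (\<lambda>(a, b). {a, b}) ` Q"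
    unfolding Q_def by (auto simp: card_2_iff)
  have "finite Q"
    unfolding Q_def using assms(1) by (auto intro: finite_subset[of _ "A \<times> A"])
  have "(\<Sum>e\<in>{e. e \<subseteq> A \<and> card e = 2}. ?q e) \<le> (\<Sum>(a, b)\<in>Q. ?q {a, b})"
    unfolding doubletons
    using sum_image_le[OF \<open>finite Q\<close>, of ?q "\<lambda>(a, b). {a, b}"] emit_prob_nonneg[OF assms(2)]
    by (simp add: o_def case_prod_unfold)
  also have "\<dots> \<le> (\<Sum>(a, b)\<in>Q. p / \<epsilon> * ((?h a + ?h b) / 2))"
    using emit_prob_doubleton_le_mean[OF assms(2)] by (intro sum_mono) auto
  also have "\<dots> \<le> (\<Sum>(a, b)\<in>A \<times> A. p / \<epsilon> * ((?h a + ?h b) / 2))"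
  proof (rule sum_mono2)
    show "0 \<le> (\<lambda>(a, b). p / \<epsilon> * ((?h a + ?h b) / 2)) ab" for ab
      using assms(2) by (cases ab) (simp only: prod.case, intro mult_nonneg_nonneg, auto)
  qed (use assms(1) in \<open>auto simp: Q_def\<close>)
  also have "\<dots> = p / \<epsilon> * (\<Sum>(a, b)\<in>A \<times> A. (?h a + ?h b) / 2)"
    by (simp only: sum_distrib_left case_prod_unfold)
  also have "\<dots> = p / \<epsilon> * real (card A) * (\<Sum>a\<in>A. ?h a)"
    by (simp only: sum_product_mean[OF assms(1)] mult.assoc)
  finally show ?thesis .
qed

lemma sum_inverse_occ_le:
  assumes "\<forall>k<N. T k \<subseteq> {..<D}"
  shows "(\<Sum>k<N. \<Sum>a\<in>T k. 1 / real (occ N T a)) \<le> real D"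
proof -
  have "(\<Sum>a\<in>T k. 1 / real (occ N T a)) = (\<Sum>a<D. if a \<in> T k then 1 / real (occ N T a) else 0)"
    if "k < N" for k
    using sum.inter_restrict[of "{..<D}" "\<lambda>a. 1 / real (occ N T a)" "T k"] assms that
    by (simp add: Int_absorb1)
  then have "(\<Sum>k<N. \<Sum>a\<in>T k. 1 / real (occ N T a))
      = (\<Sum>k<N. \<Sum>a<D. if a \<in> T k then 1 / real (occ N T a) else 0)"
    by (rule sum.cong[OF refl]) simp
  also have "\<dots> = (\<Sum>a<D. \<Sum>k<N. if a \<in> T k then 1 / real (occ N T a) else 0)"
    by (rule sum.swap)
  also have "\<dots> = (\<Sum>a<D. real (occ N T a) * (1 / real (occ N T a)))"
    by (intro sum.cong refl) (simp add: sum.If_cases occ_def Int_def conj_commute)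
  also have "\<dots> \<le> (\<Sum>a<D. 1)"
    by (intro sum_mono) simp
  finally show ?thesis by simp
qed

lemma emit_slots_eq_Sigma:
  "emit_slots N T = Sigma {..<N} (\<lambda>k. {e. e \<subseteq> T k \<and> card e = 2})"
  unfolding emit_slots_def by (auto simp: card_2_iff)

lemma expected_shuffle_size_eq_sum_emit_prob:
  assumes "\<forall>k<N. finite (T k)" and "0 \<le> p / \<epsilon>"
  shows "measure_pmf.expectation (cosine_sample_emit p \<epsilon> N T) (\<lambda>f. real (shuffle_size N T f))
           = (\<Sum>k<N. \<Sum>e\<in>{e. e \<subseteq> T k \<and> card e = 2}. emit_prob p \<epsilon> N T e)"
proof -
  have "finite (emit_slots N T)"
    using assms(1) unfolding emit_slots_eq_Sigma by (auto intro: finite_subset[of _ "Pow _"])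
  then have "measure_pmf.expectation (cosine_sample_emit p \<epsilon> N T) (\<lambda>f. real (shuffle_size N T f))
           = (\<Sum>s\<in>emit_slots N T. emit_prob p \<epsilon> N T (snd s))"
    unfolding cosine_sample_emit_def shuffle_size_def case_prod_unfold
    using emit_prob_nonneg[OF assms(2)] emit_prob_le_one
    by (intro expectation_card_Pi_pmf_bernoulli) auto
  also have "\<dots> = (\<Sum>k<N. \<Sum>e\<in>{e. e \<subseteq> T k \<and> card e = 2}. emit_prob p \<epsilon> N T e)"
    unfolding emit_slots_eq_Sigma using assms(1)
    by (subst sum.Sigma) (auto intro: finite_subset[of _ "Pow _"] simp: case_prod_unfold)
  finally show ?thesis .
qed

lemma expected_shuffle_size_le:
  assumes docs: "\<forall>k<N. T k \<subseteq> {..<D} \<and> card (T k) \<le> L" and "0 \<le> p / \<epsilon>"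
  shows "measure_pmf.expectation (cosine_sample_emit p \<epsilon> N T) (\<lambda>f. real (shuffle_size N T f))
           \<le> p / \<epsilon> * real L * real D"
proof -
  let ?S = "\<lambda>k. \<Sum>a\<in>T k. 1 / real (occ N T a)"
  have finite_docs: "\<forall>k<N. finite (T k)"
    using docs finite_nat_iff_bounded by blast
  have per_document: "(\<Sum>e\<in>{e. e \<subseteq> T k \<and> card e = 2}. emit_prob p \<epsilon> N T e)
                        \<le> p / \<epsilon> * real L * ?S k" if "k < N" for k
  proof -
    have "(\<Sum>e\<in>{e. e \<subseteq> T k \<and> card e = 2}. emit_prob p \<epsilon> N T e)
          \<le> p / \<epsilon> * real (card (T k)) * ?S k"
      using finite_docs that assms(2) by (intro sum_emit_prob_doubletons_le) auto
    also have "\<dots> \<le> p / \<epsilon> * real L * ?S k"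
      using docs that assms(2) by (intro mult_right_mono mult_left_mono sum_nonneg) auto
    finally show ?thesis .
  qed
  have "measure_pmf.expectation (cosine_sample_emit p \<epsilon> N T) (\<lambda>f. real (shuffle_size N T f))
      \<le> (\<Sum>k<N. p / \<epsilon> * real L * ?S k)"
    unfolding expected_shuffle_size_eq_sum_emit_prob[OF finite_docs assms(2)]
    using per_document by (intro sum_mono) auto
  also have "\<dots> = p / \<epsilon> * real L * (\<Sum>k<N. ?S k)"
    by (simp add: sum_distrib_left)
  also have "\<dots> \<le> p / \<epsilon> * real L * real D"
    using docs assms(2) by (intro mult_left_mono sum_inverse_occ_le mult_nonneg_nonneg) auto
  finally show ?thesis .
qed

lemma card_ordered_pairs_eq_choose_2:
  fixes A :: "'a :: linorder set"
  assumes "finite A"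
  shows "card {(x, y). x < y \<and> x \<in> A \<and> y \<in> A} = card A choose 2"
proof -
  have "bij_betw (\<lambda>(x, y). {x, y}) {(x, y). x < y \<and> x \<in> A \<and> y \<in> A} {B. B \<subseteq> A \<and> card B = 2}"
  proof (rule bij_betw_imageI)
    show "inj_on (\<lambda>(x, y). {x, y}) {(x, y). x < y \<and> x \<in> A \<and> y \<in> A}"
      by (auto intro!: inj_onI simp: doubleton_eq_iff)
    show "(\<lambda>(x, y). {x, y}) ` {(x, y). x < y \<and> x \<in> A \<and> y \<in> A} = {B. B \<subseteq> A \<and> card B = 2}"
    proof (intro equalityI subsetI)
      fix B assume "B \<in> {B. B \<subseteq> A \<and> card B = 2}"
      then obtain x y where "B = {x, y}" "x \<noteq> y" "x \<in> A" "y \<in> A"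
        by (auto simp: card_2_iff)
      then show "B \<in> (\<lambda>(x, y). {x, y}) ` {(x, y). x < y \<and> x \<in> A \<and> y \<in> A}"
        by (cases x y rule: linorder_cases) (auto simp: image_iff insert_commute)
    qed auto
  qed
  then show ?thesis
    using bij_betw_same_card n_subsets[OF assms] by fastforce
qed

lemma cosine_eq_1_if_disjoint_documents:
  assumes "disjoint_family_on T {..<N}" and "k < N" and "x \<in> T k" and "y \<in> T k"
  shows "cosine N T x y = 1"
proof -
  have only_k: "{j. j < N \<and> z \<in> T j} = {k}" if "z \<in> T k" for z
    using assms(1,2) that by (auto simp: disjoint_family_on_def)
  have "{j. j < N \<and> x \<in> T j \<and> y \<in> T j} = {k}"
    using only_k[OF assms(3)] assms(4) by auto
  then have "occ N T x = 1" "occ N T y = 1" "co_occ N T x y = 1"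
    using only_k assms(3,4) by (simp_all add: occ_def co_occ_def)
  then show ?thesis
    by (simp add: cosine_def)
qed

lemma disjoint_family_blocks:
  fixes L :: nat
  shows "disjoint_family (\<lambda>k. {k * L..<k * L + L})"
proof -
  have "{j * L..<j * L + L} \<inter> {k * L..<k * L + L} = {}" if "j < k" for j k
  proof -
    have "j * L + L \<le> k * L"
      using mult_le_mono1[of "Suc j" k L] that by simp
    then show ?thesis by auto
  qed
  then show ?thesis
    unfolding disjoint_family_on_def by (metis Int_commute linorder_neqE_nat)
qed

lemma block_subset_lessThan:
  fixes D L :: nat
  assumes "k < D div L"
  shows "{k * L..<k * L + L} \<subseteq> {..<D}"
proof -
  have "k * L + L \<le> D div L * L"
    using mult_le_mono1[of "Suc k" "D div L" L] assms by simp
  also have "\<dots> \<le> D"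
    by (rule div_times_less_eq_dividend)
  finally show ?thesis by auto
qed

lemma exists_corpus_with_many_similar_pairs:
  fixes D L :: nat and \<epsilon> :: real
  assumes "\<epsilon> \<le> 1"
  shows "\<exists>N (T :: nat \<Rightarrow> nat set).
           (\<forall>k<N. T k \<subseteq> {..<D} \<and> card (T k) \<le> L) \<and>
           card {(x, y). x < y \<and> y < D \<and> cosine N T x y = 1 \<and> cosine N T x y \<ge> \<epsilon>}
             \<ge> (D div L) * (L choose 2)"
proof -
  define N where "N = D div L"
  define T where "T = (\<lambda>k. {k * L..<k * L + L})"
  define pairs where "pairs = (\<lambda>k. {(x, y). x < y \<and> x \<in> T k \<and> y \<in> T k})"
  define similar where
    "similar = {(x, y). x < y \<and> y < D \<and> cosine N T x y = 1 \<and> cosine N T x y \<ge> \<epsilon>}"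
  have docs: "\<forall>k<N. T k \<subseteq> {..<D} \<and> card (T k) \<le> L"
    unfolding T_def N_def by (simp add: block_subset_lessThan)
  have disjoint: "disjoint_family_on T {..<N}"
    unfolding T_def using disjoint_family_on_mono[OF subset_UNIV disjoint_family_blocks] .
  have "(\<Union>k<N. pairs k) \<subseteq> similar"
  proof
    fix xy assume "xy \<in> (\<Union>k<N. pairs k)"
    then obtain k x y where "k < N" "xy = (x, y)" "x < y" "x \<in> T k" "y \<in> T k"
      unfolding pairs_def by blast
    moreover have "cosine N T x y = 1"
      using cosine_eq_1_if_disjoint_documents[OF disjoint] calculation by blast
    ultimately show "xy \<in> similar"
      using docs assms unfolding similar_def by auto
  qed
  moreover have "finite similar"
    unfolding similar_def by (rule finite_subset[of _ "{..<D} \<times> {..<D}"]) auto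
  ultimately have "card (\<Union>k<N. pairs k) \<le> card similar"
    by (rule card_mono[rotated])
  moreover have "card (\<Union>k<N. pairs k) = N * (L choose 2)"
  proof -
    have "disjoint_family_on pairs {..<N}"
      using disjoint unfolding pairs_def disjoint_family_on_def by blast
    moreover have "finite (pairs k)" for k
      unfolding pairs_def T_def by (rule finite_subset[of _ "T k \<times> T k"]) (auto simp: T_def)
    ultimately have "card (\<Union>k<N. pairs k) = (\<Sum>k<N. card (pairs k))"
      by (intro card_UN_disjoint') auto
    also have "\<dots> = (\<Sum>k<N. L choose 2)"
      unfolding pairs_def by (subst card_ordered_pairs_eq_choose_2) (simp_all add: T_def)
    finally show ?thesis by simp
  qed
  ultimately have "N * (L choose 2) \<le> card similar"
    by simp
  with docs show ?thesis
    unfolding similar_def N_def by (intro exI conjI)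
qed

theorem theorem2:
  fixes D L :: nat and \<epsilon> p :: real
  assumes "D \<ge> 2" and "0 < \<epsilon>" and "\<epsilon> \<le> 1" and "p = 2 * ln (real D)"
  shows "(\<forall>N (T :: nat \<Rightarrow> nat set).
            (\<forall>k<N. T k \<subseteq> {..<D} \<and> card (T k) \<le> L) \<longrightarrow>
            measure_pmf.expectation (cosine_sample_emit p \<epsilon> N T)
               (\<lambda>f. real (shuffle_size N T f)) \<le> p / \<epsilon> * real L * real D)
       \<and> (L \<ge> 2 \<and> L dvd D \<longrightarrow>
            (\<exists>N (T :: nat \<Rightarrow> nat set).
               (\<forall>k<N. T k \<subseteq> {..<D} \<and> card (T k) \<le> L) \<and>
               card {(x, y). x < y \<and> y < D \<and> cosine N T x y = 1 \<and> cosine N T x y \<ge> \<epsilon>}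
                 \<ge> (D div L) * (L choose 2)))"
proof -
  have "0 \<le> p / \<epsilon>"
    using assms(1,2,4) by simp
  then show ?thesis
    using expected_shuffle_size_le exists_corpus_with_many_similar_pairs[OF assms(3)] by blast
qed

end
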